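(* Let $k\ge1$ and $X,Y\in\mathrm{Mat}_k(\mathbb{Z}_{\geq 1})$. Then $\mathrm{size}_2(X)+\mathrm{size}_2(Y)\le\mathrm{size}_2(X\otimes Y)+2k^2-1$, where $\otimes$ is max-times matrix multiplication.
   Context: Max-times product: $(X\otimes Y)_{ij}=\max_{1\le l\le k}(x_{il}\cdot y_{lj})$. For an integer $a\ge1$, $\mathrm{size}_2(a)=\lfloor\log_2 a\rfloor+1$. For a $k\times k$ matrix $A$, $\mathrm{size}_2(A)=\sum_{i=1}^k\sum_{j=1}^k\mathrm{size}_2(a_{ij})+k^2-1$. *)

theory Defs
  imports Complex_Main
begin

definition size2 :: "nat \<Rightarrow> nat" where
  "size2 a = nat \<lfloor>log 2 (real a)\<rfloor> + 1"

text \<open>k x k matrices are represented as functions nat => nat => nat,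
  only entries with indices in {0..<k} are relevant.\<close>
definition size2_mat :: "nat \<Rightarrow> (nat \<Rightarrow> nat \<Rightarrow> nat) \<Rightarrow> nat" where
  "size2_mat k A = (\<Sum>i<k. \<Sum>j<k. size2 (A i j)) + k^2 - 1"

definition maxtimes :: "nat \<Rightarrow> (nat \<Rightarrow> nat \<Rightarrow> nat) \<Rightarrow> (nat \<Rightarrow> nat \<Rightarrow> nat) \<Rightarrow> (nat \<Rightarrow> nat \<Rightarrow> nat)" where
  "maxtimes k X Y = (\<lambda>i j. Max ((\<lambda>l. X i l * Y l j) ` {..<k}))"

end

theory Submission
  imports Defs "HOL-Number_Theory.Cong"
begin

text \<open>Since \<open>size2 (a * b) \<ge> size2 a + size2 b - 1\<close> and \<open>(X \<otimes> Y) i j \<ge> X i l * Y l j\<close> for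
  every \<open>l\<close>, each entry of \<open>X \<otimes> Y\<close> pays for one entry of \<open>X\<close> and one entry of \<open>Y\<close>, up to 1.
  Choosing \<open>l = (i + j) mod k\<close> (a Latin square) lets every entry of \<open>X\<close> and of \<open>Y\<close> be paid for
  exactly once, so summing over all \<open>(i, j)\<close> loses at most \<open>k\<^sup>2\<close>.\<close>

lemma two_pow_le_iff_less_size2:
  assumes "a \<ge> 1"
  shows "2 ^ n \<le> a \<longleftrightarrow> n < size2 a"
proof -
  have "\<lfloor>log 2 (real a)\<rfloor> \<ge> 0"
    using assms by simp
  then have "n < size2 a \<longleftrightarrow> int n \<le> \<lfloor>log 2 (real a)\<rfloor>"
    by (simp add: size2_def) linarith
  also have "\<dots> \<longleftrightarrow> real n \<le> log 2 (real a)"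
    by (simp add: le_floor_iff)
  also have "\<dots> \<longleftrightarrow> 2 powr real n \<le> real a"
    using assms by (simp add: le_log_iff)
  also have "\<dots> \<longleftrightarrow> 2 ^ n \<le> a"
  proof -
    have "2 powr real n = real (2 ^ n)"
      by (simp add: powr_realpow)
    then show ?thesis
      by (simp only: of_nat_le_iff)
  qed
  finally show ?thesis ..
qed

lemma two_pow_size2_le:
  assumes "a \<ge> 1"
  shows "2 ^ (size2 a - 1) \<le> a"
  using two_pow_le_iff_less_size2[OF assms] by (simp add: size2_def)

lemma size2_mono:
  assumes "1 \<le> a" "a \<le> c"
  shows "size2 a \<le> size2 c"
proof -
  have "2 ^ (size2 a - 1) \<le> c"
    using two_pow_size2_le[OF assms(1)] assms(2) by linarith
  then have "size2 a - 1 < size2 c"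
    using assms by (simp add: two_pow_le_iff_less_size2)
  then show ?thesis
    by linarith
qed

lemma size2_mult_le:
  assumes "a \<ge> 1" "b \<ge> 1"
  shows "size2 a + size2 b \<le> size2 (a * b) + 1"
proof -
  have "2 ^ (size2 a - 1 + (size2 b - 1)) \<le> a * b"
    unfolding power_add using two_pow_size2_le[OF assms(1)] two_pow_size2_le[OF assms(2)]
    by (rule mult_le_mono)
  then have "size2 a - 1 + (size2 b - 1) < size2 (a * b)"
    using assms by (simp add: two_pow_le_iff_less_size2)
  then show ?thesis
    by (simp add: size2_def)
qed

lemma inj_on_rotate: "inj_on (\<lambda>j. (i + j) mod k) {..<k::nat}"
  by (auto intro!: inj_onI simp flip: cong_def
      simp: cong_add_lcancel_nat dest: cong_less_modulus_unique_nat)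

lemma sum_lessThan_rotate: "(\<Sum>j<k. f ((i + j) mod k)) = (\<Sum>j<k::nat. f j)"
proof (cases "k = 0")
  case False
  then have "(\<lambda>j. (i + j) mod k) ` {..<k} = {..<k}"
    by (intro endo_inj_surj inj_on_rotate) auto
  then show ?thesis
    using sum.reindex[OF inj_on_rotate, of f i k] by simp
qed simp

lemma size2_le_size2_maxtimes:
  assumes "i < k" "j < k" "l < k"
    and "\<And>i j. i < k \<Longrightarrow> j < k \<Longrightarrow> X i j \<ge> 1"
    and "\<And>i j. i < k \<Longrightarrow> j < k \<Longrightarrow> Y i j \<ge> 1"
  shows "size2 (X i l) + size2 (Y l j) \<le> size2 (maxtimes k X Y i j) + 1"
proof -
  have "X i l * Y l j \<le> maxtimes k X Y i j"
    unfolding maxtimes_def using assms(3) by (intro Max_ge) auto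
  then have "size2 (X i l * Y l j) \<le> size2 (maxtimes k X Y i j)"
    using assms by (intro size2_mono) auto
  then show ?thesis
    using size2_mult_le[of "X i l" "Y l j"] assms by fastforce
qed

lemma sum_size2_le_sum_size2_maxtimes:
  assumes "\<And>i j. i < k \<Longrightarrow> j < k \<Longrightarrow> X i j \<ge> 1"
    and "\<And>i j. i < k \<Longrightarrow> j < k \<Longrightarrow> Y i j \<ge> 1"
  shows "(\<Sum>i<k. \<Sum>j<k. size2 (X i j)) + (\<Sum>i<k. \<Sum>j<k. size2 (Y i j))
    \<le> (\<Sum>i<k. \<Sum>j<k. size2 (maxtimes k X Y i j)) + k\<^sup>2"
proof -
  define l where "l i j = (i + j) mod k" for i j
  have "(\<Sum>i<k. \<Sum>j<k. size2 (X i j)) = (\<Sum>i<k. \<Sum>j<k. size2 (X i (l i j)))"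
    by (simp add: l_def sum_lessThan_rotate[where f = "\<lambda>j. size2 (X _ j)"])
  moreover have "(\<Sum>i<k. \<Sum>j<k. size2 (Y i j)) = (\<Sum>i<k. \<Sum>j<k. size2 (Y (l i j) j))"
    by (subst (1 2) sum.swap)
      (simp add: l_def add.commute sum_lessThan_rotate[where f = "\<lambda>i. size2 (Y i _)"])
  moreover have "(\<Sum>i<k. \<Sum>j<k. size2 (X i (l i j)) + size2 (Y (l i j) j))
      \<le> (\<Sum>i<k. \<Sum>j<k. size2 (maxtimes k X Y i j) + 1)"
    using assms by (intro sum_mono size2_le_size2_maxtimes) (auto simp: l_def)
  ultimately show ?thesis
    by (simp only: sum.distrib) (simp add: power2_eq_square)
qed

theorem mainTheorem14:
  fixes k :: nat and X Y :: "nat \<Rightarrow> nat \<Rightarrow> nat"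
  assumes "k \<ge> 1"
    and "\<And>i j. i < k \<Longrightarrow> j < k \<Longrightarrow> X i j \<ge> 1"
    and "\<And>i j. i < k \<Longrightarrow> j < k \<Longrightarrow> Y i j \<ge> 1"
  shows "size2_mat k X + size2_mat k Y \<le> size2_mat k (maxtimes k X Y) + 2 * k^2 - 1"
proof -
  have "k\<^sup>2 \<ge> 1"
    using assms(1) by simp
  then show ?thesis
    using sum_size2_le_sum_size2_maxtimes[where k = k and X = X and Y = Y, OF assms(2,3)] unfolding size2_mat_def by linarith
qed

end
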